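(* Let $A$ be a semiprime $2$-torsion free associative algebra and let $Q$ be a subalgebra of $Q_s(A)$ containing $A$. Then $[Q^{(-)},Q^{(-)}]/Z([Q^{(-)},Q^{(-)}])$ is a Lie algebra of quotients of $[A^{(-)},A^{(-)}]/Z([A^{(-)},A^{(-)}])$ (the latter being naturally a Lie subalgebra of the former).
   Context: Algebras are over a commutative unital ring $\Phi$. For an associative algebra $A$, $A^{(-)}$ is the Lie algebra on $A$ with $[x,y]=xy-yx$; $[A^{(-)},A^{(-)}]$ is the $\Phi$-span of all $[x,y]$, a Lie subalgebra, and $Z(\cdot)$ denotes the center of a Lie algebra. $A$ is $2$-torsion free if $2x=0\Rightarrow x=0$. $Q_s(A)$ is the Martindale symmetric algebra of quotients of the semiprime algebra $A$: the elements $q$ of the maximal left quotient algebra $Q^l_{\max}(A)$ for which some essential ideal $I$ of $A$ satisfies $Iq+qI\subseteq A$. For a Lie subalgebra $L\subseteq Q$, $Q$ is an algebra of quotients of $L$ if for every nonzero $q\in Q$ there is an ideal $I$ of $L$ with $\mathrm{Ann}_L(I)=\{a\in L:[a,I]=0\}=0$ and $0\ne[I,q]\subseteq L$. *)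

theory Defs
  imports Main
begin

definition phi_algebra :: "('r::comm_ring_1 \<Rightarrow> 'q::ring \<Rightarrow> 'q) \<Rightarrow> bool" where
  "phi_algebra sm \<longleftrightarrow>
     (\<forall>a b x. sm (a * b) x = sm a (sm b x)) \<and>
     (\<forall>x. sm 1 x = x) \<and>
     (\<forall>a b x. sm (a + b) x = sm a x + sm b x) \<and>
     (\<forall>a x y. sm a (x + y) = sm a x + sm a y) \<and>
     (\<forall>a x y. sm a (x * y) = sm a x * y) \<and>
     (\<forall>a x y. sm a (x * y) = x * sm a y)"

definition submodule :: "('r::comm_ring_1 \<Rightarrow> 'q::ring \<Rightarrow> 'q) \<Rightarrow> 'q set \<Rightarrow> bool" where
  "submodule sm V \<longleftrightarrow> 0 \<in> V \<and> (\<forall>x\<in>V. \<forall>y\<in>V. x + y \<in> V) \<and> (\<forall>a. \<forall>x\<in>V. sm a x \<in> V)"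

definition subalgebra :: "('r::comm_ring_1 \<Rightarrow> 'q::ring \<Rightarrow> 'q) \<Rightarrow> 'q set \<Rightarrow> bool" where
  "subalgebra sm S \<longleftrightarrow> submodule sm S \<and> (\<forall>x\<in>S. \<forall>y\<in>S. x * y \<in> S)"

definition alg_ideal :: "('r::comm_ring_1 \<Rightarrow> 'q::ring \<Rightarrow> 'q) \<Rightarrow> 'q set \<Rightarrow> 'q set \<Rightarrow> bool" where
  "alg_ideal sm A I \<longleftrightarrow> I \<subseteq> A \<and> submodule sm I \<and>
     (\<forall>a\<in>A. \<forall>x\<in>I. a * x \<in> I \<and> x * a \<in> I)"

definition left_ideal :: "('r::comm_ring_1 \<Rightarrow> 'q::ring \<Rightarrow> 'q) \<Rightarrow> 'q set \<Rightarrow> 'q set \<Rightarrow> bool" where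
  "left_ideal sm A L \<longleftrightarrow> L \<subseteq> A \<and> submodule sm L \<and> (\<forall>a\<in>A. \<forall>x\<in>L. a * x \<in> L)"

definition semiprime :: "('r::comm_ring_1 \<Rightarrow> 'q::ring \<Rightarrow> 'q) \<Rightarrow> 'q set \<Rightarrow> bool" where
  "semiprime sm A \<longleftrightarrow> (\<forall>I. alg_ideal sm A I \<and> (\<forall>x\<in>I. \<forall>y\<in>I. x * y = 0) \<longrightarrow> I = {0})"

definition two_torsion_free :: "'q::ring set \<Rightarrow> bool" where
  "two_torsion_free A \<longleftrightarrow> (\<forall>x\<in>A. x + x = 0 \<longrightarrow> x = 0)"

definition essential_ideal :: "('r::comm_ring_1 \<Rightarrow> 'q::ring \<Rightarrow> 'q) \<Rightarrow> 'q set \<Rightarrow> 'q set \<Rightarrow> bool" where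
  "essential_ideal sm A I \<longleftrightarrow> alg_ideal sm A I \<and>
     (\<forall>J. alg_ideal sm A J \<and> I \<inter> J = {0} \<longrightarrow> J = {0})"

text \<open>Dense left ideal (density taken in the unitization Phi x A).\<close>
definition dense_left_ideal :: "('r::comm_ring_1 \<Rightarrow> 'q::ring \<Rightarrow> 'q) \<Rightarrow> 'q set \<Rightarrow> 'q set \<Rightarrow> bool" where
  "dense_left_ideal sm A L \<longleftrightarrow> left_ideal sm A L \<and>
     (\<forall>r1\<in>A. \<forall>r2\<in>A. r1 \<noteq> 0 \<longrightarrow>
        (\<exists>c. \<exists>r\<in>A. sm c r1 + r * r1 \<noteq> 0 \<and> sm c r2 + r * r2 \<in> L))"

text \<open>Qmax is (a copy of) the maximal left quotient algebra of A, given by its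
  standard characterising properties (Utumi).\<close>
definition is_left_max_quotient ::
  "('r::comm_ring_1 \<Rightarrow> 'q::ring \<Rightarrow> 'q) \<Rightarrow> 'q set \<Rightarrow> 'q set \<Rightarrow> bool" where
  "is_left_max_quotient sm A Qmax \<longleftrightarrow>
     subalgebra sm Qmax \<and> A \<subseteq> Qmax \<and>
     (\<forall>q\<in>Qmax. \<exists>L. dense_left_ideal sm A L \<and> (\<forall>x\<in>L. x * q \<in> A)) \<and>
     (\<forall>q\<in>Qmax. \<forall>L. q \<noteq> 0 \<and> dense_left_ideal sm A L \<longrightarrow> (\<exists>x\<in>L. x * q \<noteq> 0)) \<and>
     (\<forall>L f. dense_left_ideal sm A L \<and> (\<forall>x\<in>L. f x \<in> A) \<and>
        (\<forall>x\<in>L. \<forall>y\<in>L. f (x + y) = f x + f y) \<and>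
        (\<forall>c. \<forall>x\<in>L. f (sm c x) = sm c (f x)) \<and>
        (\<forall>a\<in>A. \<forall>x\<in>L. f (a * x) = a * f x)
        \<longrightarrow> (\<exists>q\<in>Qmax. \<forall>x\<in>L. f x = x * q))"

definition Qs :: "('r::comm_ring_1 \<Rightarrow> 'q::ring \<Rightarrow> 'q) \<Rightarrow> 'q set \<Rightarrow> 'q set \<Rightarrow> 'q set" where
  "Qs sm A Qmax = {q \<in> Qmax. \<exists>I. essential_ideal sm A I \<and> (\<forall>x\<in>I. x * q \<in> A \<and> q * x \<in> A)}"

definition bracket :: "'q::ring \<Rightarrow> 'q \<Rightarrow> 'q" where
  "bracket x y = x * y - y * x"

definition phi_span :: "('r::comm_ring_1 \<Rightarrow> 'q::ring \<Rightarrow> 'q) \<Rightarrow> 'q set \<Rightarrow> 'q set" where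
  "phi_span sm G = \<Inter>{V. G \<subseteq> V \<and> submodule sm V}"

definition commutator_space :: "('r::comm_ring_1 \<Rightarrow> 'q::ring \<Rightarrow> 'q) \<Rightarrow> 'q set \<Rightarrow> 'q set" where
  "commutator_space sm S = phi_span sm {bracket x y | x y. x \<in> S \<and> y \<in> S}"

definition lie_center :: "'q::ring set \<Rightarrow> 'q set" where
  "lie_center L = {z \<in> L. \<forall>x\<in>L. bracket z x = 0}"

text \<open>Quotient Lie algebras are handled through representatives: for Lie subalgebras
  LA \<subseteq> LQ with centres ZA, ZQ and ZA = LA \<inter> ZQ, LA/ZA embeds into LQ/ZQ via
  x + ZA \<mapsto> x + ZQ. An ideal of LA/ZA corresponds to a Lie ideal I of LA containing ZA.
  LQ/ZQ is an algebra of quotients of LA/ZA iff for every q in LQ \<setminus> ZQ there is such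
  an I with zero annihilator in LA/ZA and 0 \<noteq> [I/ZA, q + ZQ] \<subseteq> (LA + ZQ)/ZQ.\<close>
definition lie_quotient_algebra_of_quotients ::
  "('r::comm_ring_1 \<Rightarrow> 'q::ring \<Rightarrow> 'q) \<Rightarrow> 'q set \<Rightarrow> 'q set \<Rightarrow> 'q set \<Rightarrow> 'q set \<Rightarrow> bool" where
  "lie_quotient_algebra_of_quotients sm LA ZA LQ ZQ \<longleftrightarrow>
     (\<forall>q\<in>LQ. q \<notin> ZQ \<longrightarrow>
        (\<exists>I. submodule sm I \<and> ZA \<subseteq> I \<and> I \<subseteq> LA \<and>
             (\<forall>a\<in>LA. \<forall>x\<in>I. bracket a x \<in> I) \<and>
             (\<forall>a\<in>LA. (\<forall>x\<in>I. bracket a x \<in> ZA) \<longrightarrow> a \<in> ZA) \<and>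
             (\<forall>x\<in>I. \<exists>a\<in>LA. \<exists>z\<in>ZQ. bracket x q = a + z) \<and>
             (\<exists>x\<in>I. bracket x q \<notin> ZQ)))"

end

(*
  In a semiprime algebra A an element commuting with all commutators [x,y] is
  central, so Z([A,A]) lies in the centre of A; central elements of A commute with the whole of
  Q_max, since a dense left ideal L detects zero.  This gives Z([A,A]) = [A,A] \<inter> Z([Q,Q]).

  For q \<in> [Q,Q] \ Z([Q,Q]) pick an essential ideal J of A with Jq + qJ \<subseteq> A and take the Lie
  ideal I = [J,J] + Z([A,A]) of [A,A]; the Jacobi identity gives [I,q] \<subseteq> [A,A].  The remaining
  two conditions reduce to one Herstein-type lemma: if a normalises J into A and [a,[J,J]] lies
  in the centre of A, then [a,J] = 0.  Its proof uses 2-torsion freeness once (to cancel a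
  factor 2 in a second-order Leibniz expansion) and otherwise semiprimeness in the form
  "mAm = 0 implies m = 0".  Applied to a \<in> [A,A] with [a,I] \<subseteq> Z([A,A]) it makes a central;
  applied to q it makes q commute with J, hence with all of Q, contradicting q \<notin> Z([Q,Q]).
*)

theory Submission
  imports Defs
begin

lemma bracket_eq_0_iff: "bracket x y = 0 \<longleftrightarrow> x * y = y * x"
  by (simp add: bracket_def)

lemma bracket_zero_left [simp]: "bracket 0 x = 0"
  and bracket_zero_right [simp]: "bracket x 0 = 0"
  by (simp_all add: bracket_def)

lemma bracket_add_left: "bracket (u + v) x = bracket u x + bracket v x"
  and bracket_add_right: "bracket x (u + v) = bracket x u + bracket x v"
  by (simp_all add: bracket_def algebra_simps)

lemma bracket_antisym: "bracket x y = - bracket y x"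
  by (simp add: bracket_def)

lemma bracket_mult_right: "bracket a (x * y) = bracket a x * y + x * bracket a y"
  by (simp add: bracket_def algebra_simps)

lemma bracket_self_mult: "bracket x (x * y) = x * bracket x y"
  by (simp add: bracket_def algebra_simps)

lemma bracket_bracket_mult_right:
  "bracket w (bracket w (t * s)) = bracket w (bracket w t) * s
     + bracket w t * bracket w s + bracket w t * bracket w s + t * bracket w (bracket w s)"
  by (simp add: bracket_def algebra_simps)

lemma bracket_jacobi: "bracket b (bracket x y) = bracket (bracket b x) y + bracket x (bracket b y)"
  by (simp add: bracket_def algebra_simps)

lemma bracket_bracket_left:
  "bracket (bracket x y) q = bracket x (bracket y q) - bracket y (bracket x q)"
  by (simp add: bracket_def algebra_simps)

lemma bracket_mult_double_bracket_eq_0: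
  fixes a w t :: "'a::ring"
  assumes wc: "w * bracket a w = bracket a w * w"
    and we: "w * bracket a (bracket w t) = bracket a (bracket w t) * w"
    and wX: "w * bracket a (bracket w (w * t)) = bracket a (bracket w (w * t)) * w"
  shows "bracket a w * bracket w (bracket w t) = 0"
proof -
  define c e where "c = bracket a w" and "e = bracket a (bracket w t)"
  have "bracket a (bracket w (w * t)) = c * bracket w t + w * e"
    by (simp add: c_def e_def bracket_self_mult bracket_mult_right)
  then have "w * (c * bracket w t + w * e) = (c * bracket w t + w * e) * w"
    using wX by simp
  then have "(w * c) * bracket w t + w * (w * e) - c * bracket w t * w - w * (e * w) = 0"
    by (simp add: algebra_simps)
  then have "(c * w) * bracket w t - c * bracket w t * w = 0"
    using wc we by (simp add: c_def e_def mult.assoc)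
  then show ?thesis
    by (simp add: c_def bracket_def algebra_simps)
qed

lemma bracket_products_twice_eq_0:
  fixes c w t s :: "'a::ring"
  assumes ct: "c * t = t * c"
    and "c * bracket w (bracket w t) = 0" and s: "c * bracket w (bracket w s) = 0"
    and "c * bracket w (bracket w (t * s)) = 0"
  shows "c * bracket w t * bracket w s + c * bracket w t * bracket w s = 0"
proof -
  have "c * bracket w (bracket w (t * s)) = c * bracket w (bracket w t) * s
      + (c * bracket w t * bracket w s + c * bracket w t * bracket w s)
      + (c * t) * bracket w (bracket w s)"
    by (subst bracket_bracket_mult_right) (simp only: distrib_left mult.assoc add.assoc)
  moreover have "(c * t) * bracket w (bracket w s) = 0"
    using ct s by (simp add: mult.assoc)
  ultimately show ?thesis
    using assms by simp
qed

lemma lie_center_subset: "lie_center S \<subseteq> S"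
  by (simp add: lie_center_def)

lemma lie_center_commute: "z \<in> lie_center S \<Longrightarrow> x \<in> S \<Longrightarrow> z * x = x * z"
  by (simp add: lie_center_def bracket_eq_0_iff)

lemma lie_center_restrict: "z \<in> lie_center S \<Longrightarrow> z \<in> T \<Longrightarrow> T \<subseteq> S \<Longrightarrow> z \<in> lie_center T"
  by (auto simp: lie_center_def)

lemma submodule_zero: "submodule sm V \<Longrightarrow> 0 \<in> V"
  and submodule_add: "submodule sm V \<Longrightarrow> x \<in> V \<Longrightarrow> y \<in> V \<Longrightarrow> x + y \<in> V"
  and submodule_scale: "submodule sm V \<Longrightarrow> x \<in> V \<Longrightarrow> sm c x \<in> V"
  by (simp_all add: submodule_def)

lemma submodule_phi_span: "submodule sm (phi_span sm G)"
  unfolding phi_span_def submodule_def by auto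

lemma phi_span_superset: "G \<subseteq> phi_span sm G"
  unfolding phi_span_def by auto

lemma phi_span_least: "G \<subseteq> V \<Longrightarrow> submodule sm V \<Longrightarrow> phi_span sm G \<subseteq> V"
  unfolding phi_span_def by auto

lemma phi_span_induct [consumes 1, case_names zero generator add scale]:
  assumes "x \<in> phi_span sm G" and "P 0" and "\<And>g. g \<in> G \<Longrightarrow> P g"
    and "\<And>u v. P u \<Longrightarrow> P v \<Longrightarrow> P (u + v)" and "\<And>c u. P u \<Longrightarrow> P (sm c u)"
  shows "P x"
proof -
  have "phi_span sm G \<subseteq> {x. P x}"
    by (rule phi_span_least) (auto simp: submodule_def assms)
  then show ?thesis
    using assms(1) by auto
qed

lemma submodule_commutator_space: "submodule sm (commutator_space sm S)"
  unfolding commutator_space_def by (rule submodule_phi_span)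

lemma bracket_in_commutator_space: "x \<in> S \<Longrightarrow> y \<in> S \<Longrightarrow> bracket x y \<in> commutator_space sm S"
  unfolding commutator_space_def by (rule subsetD[OF phi_span_superset]) blast

lemma commutator_space_mono: "S \<subseteq> T \<Longrightarrow> commutator_space sm S \<subseteq> commutator_space sm T"
  unfolding commutator_space_def
  by (rule phi_span_least[OF _ submodule_phi_span], rule subset_trans[OF _ phi_span_superset]) blast

lemma alg_ideal_subset: "alg_ideal sm A J \<Longrightarrow> J \<subseteq> A"
  and alg_ideal_submodule: "alg_ideal sm A J \<Longrightarrow> submodule sm J"
  and alg_ideal_mult_left: "alg_ideal sm A J \<Longrightarrow> a \<in> A \<Longrightarrow> x \<in> J \<Longrightarrow> a * x \<in> J"
  and alg_ideal_mult_right: "alg_ideal sm A J \<Longrightarrow> a \<in> A \<Longrightarrow> x \<in> J \<Longrightarrow> x * a \<in> J"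
  by (simp_all add: alg_ideal_def)

lemma alg_ideal_Int: "alg_ideal sm A I \<Longrightarrow> alg_ideal sm A K \<Longrightarrow> alg_ideal sm A (I \<inter> K)"
  by (auto simp: alg_ideal_def submodule_def)

lemma essential_ideal_alg_ideal: "essential_ideal sm A J \<Longrightarrow> alg_ideal sm A J"
  by (simp add: essential_ideal_def)

definition left_annihilator :: "'q::ring set \<Rightarrow> 'q set \<Rightarrow> 'q set" where
  "left_annihilator A S = {x \<in> A. \<forall>s\<in>S. x * s = 0}"

definition right_annihilator :: "'q::ring set \<Rightarrow> 'q set \<Rightarrow> 'q set" where
  "right_annihilator A S = {x \<in> A. \<forall>s\<in>S. s * x = 0}"

locale algebra_over =
  fixes sm :: "'r::comm_ring_1 \<Rightarrow> 'q::ring \<Rightarrow> 'q"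
  assumes phi_algebra: "phi_algebra sm"
begin

lemma scale_add_left: "sm (a + b) x = sm a x + sm b x"
  and scale_add_right: "sm c (x + y) = sm c x + sm c y"
  and scale_one: "sm 1 x = x"
  and scale_mult_left: "sm c (x * y) = sm c x * y"
  and scale_mult_right: "sm c (x * y) = x * sm c y"
  using phi_algebra unfolding phi_algebra_def by blast+

lemma scale_zero_right: "sm c 0 = 0"
proof -
  have "sm c (0 + 0) = sm c 0 + sm c 0"
    by (rule scale_add_right)
  then show ?thesis
    by simp
qed

lemma scale_zero_left: "sm 0 x = 0"
proof -
  have "sm (0 + 0) x = sm 0 x + sm 0 x"
    by (rule scale_add_left)
  then show ?thesis
    by simp
qed

lemma scale_minus_one: "sm (-1) x = - x"
proof -
  have "sm (1 + -1) x = sm 1 x + sm (-1) x"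
    by (rule scale_add_left)
  then have "0 = x + sm (-1) x"
    by (simp add: scale_zero_left scale_one)
  then show ?thesis
    by (metis add_eq_0_iff)
qed

lemma scale_diff_right: "sm c (x - y) = sm c x - sm c y"
  using scale_add_right[of c "x - y" y] by (simp add: eq_diff_eq)

lemma bracket_scale_left: "bracket (sm c u) x = sm c (bracket u x)"
  and bracket_scale_right: "bracket x (sm c u) = sm c (bracket x u)"
  unfolding bracket_def
  by (simp_all add: scale_diff_right scale_mult_left[symmetric] scale_mult_right[symmetric])

lemma submodule_uminus: "submodule sm V \<Longrightarrow> x \<in> V \<Longrightarrow> - x \<in> V"
  using submodule_scale[of sm V x "-1"] by (simp add: scale_minus_one)

lemma submodule_diff: "submodule sm V \<Longrightarrow> x \<in> V \<Longrightarrow> y \<in> V \<Longrightarrow> x - y \<in> V"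
  using submodule_add[of sm V x "- y"] submodule_uminus[of V y] by simp

lemma lie_center_uminus: "submodule sm S \<Longrightarrow> z \<in> lie_center S \<Longrightarrow> - z \<in> lie_center S"
  unfolding lie_center_def bracket_def by (auto simp: submodule_uminus)

lemma subalgebra_bracket: "subalgebra sm S \<Longrightarrow> x \<in> S \<Longrightarrow> y \<in> S \<Longrightarrow> bracket x y \<in> S"
  unfolding subalgebra_def bracket_def by (simp add: submodule_diff)

lemma commutator_space_subset: "subalgebra sm S \<Longrightarrow> commutator_space sm S \<subseteq> S"
  unfolding commutator_space_def
  by (rule phi_span_least) (auto simp: subalgebra_bracket subalgebra_def)

lemma alg_ideal_bracket: "alg_ideal sm A J \<Longrightarrow> a \<in> A \<Longrightarrow> x \<in> J \<Longrightarrow> bracket a x \<in> J"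
  unfolding bracket_def
  by (simp add: submodule_diff alg_ideal_submodule alg_ideal_mult_left alg_ideal_mult_right)

end

locale semiprime_algebra = algebra_over +
  fixes A :: "'q::ring set"
  assumes subalgebra_A: "subalgebra sm A"
    and semiprime_A: "semiprime sm A"
begin

lemma submodule_A: "submodule sm A"
  using subalgebra_A by (simp add: subalgebra_def)

lemma zero_in_A: "0 \<in> A"
  and add_in_A: "x \<in> A \<Longrightarrow> y \<in> A \<Longrightarrow> x + y \<in> A"
  and scale_in_A: "x \<in> A \<Longrightarrow> sm c x \<in> A"
  using submodule_A by (simp_all add: submodule_def)

lemma mult_in_A: "x \<in> A \<Longrightarrow> y \<in> A \<Longrightarrow> x * y \<in> A"
  using subalgebra_A by (simp add: subalgebra_def)

lemma diff_in_A: "x \<in> A \<Longrightarrow> y \<in> A \<Longrightarrow> x - y \<in> A"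
  by (rule submodule_diff[OF submodule_A])

lemma bracket_in_A: "x \<in> A \<Longrightarrow> y \<in> A \<Longrightarrow> bracket x y \<in> A"
  by (rule subalgebra_bracket[OF subalgebra_A])

lemma essential_ideal_A: "essential_ideal sm A A"
  using submodule_A mult_in_A unfolding essential_ideal_def alg_ideal_def by blast

lemma alg_ideal_right_annihilator:
  assumes "\<forall>s\<in>S. \<forall>a\<in>A. s * a \<in> S"
  shows "alg_ideal sm A (right_annihilator A S)"
  unfolding alg_ideal_def submodule_def right_annihilator_def
proof (intro conjI ballI allI)
  fix a x assume a: "a \<in> A" and x: "x \<in> {x \<in> A. \<forall>s\<in>S. s * x = 0}"
  have "s * (a * x) = 0" if "s \<in> S" for s
  proof -
    have "s * a \<in> S"
      using assms a that by blast
    then show ?thesis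
      using x by (simp add: mult.assoc[symmetric])
  qed
  moreover have "s * (x * a) = 0" if "s \<in> S" for s
    using x that by (simp add: mult.assoc[symmetric])
  ultimately show "a * x \<in> {x \<in> A. \<forall>s\<in>S. s * x = 0}" "x * a \<in> {x \<in> A. \<forall>s\<in>S. s * x = 0}"
    using a x mult_in_A by auto
qed (auto simp: zero_in_A add_in_A scale_in_A distrib_left
      scale_mult_right[symmetric] scale_zero_right)

lemma alg_ideal_left_annihilator:
  assumes "\<forall>s\<in>S. \<forall>a\<in>A. a * s \<in> S"
  shows "alg_ideal sm A (left_annihilator A S)"
  unfolding alg_ideal_def submodule_def left_annihilator_def
proof (intro conjI ballI allI)
  fix a x assume a: "a \<in> A" and x: "x \<in> {x \<in> A. \<forall>s\<in>S. x * s = 0}"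
  have "(x * a) * s = 0" if "s \<in> S" for s
  proof -
    have "a * s \<in> S"
      using assms a that by blast
    then show ?thesis
      using x by (simp add: mult.assoc)
  qed
  moreover have "(a * x) * s = 0" if "s \<in> S" for s
    using x that by (simp add: mult.assoc)
  ultimately show "a * x \<in> {x \<in> A. \<forall>s\<in>S. x * s = 0}" "x * a \<in> {x \<in> A. \<forall>s\<in>S. x * s = 0}"
    using a x mult_in_A by auto
qed (auto simp: zero_in_A add_in_A scale_in_A distrib_right
      scale_mult_left[symmetric] scale_zero_right)

lemma alg_ideal_Int_eq_0_if_mult_eq_0:
  assumes "alg_ideal sm A I" "alg_ideal sm A K" and "\<forall>x\<in>I. \<forall>y\<in>K. x * y = 0"
  shows "I \<inter> K = {0}"
  using semiprime_A assms alg_ideal_Int unfolding semiprime_def by blast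

lemma essential_ideal_left_faithful:
  assumes J: "essential_ideal sm A J" and "b \<in> A" and "\<forall>j\<in>J. j * b = 0"
  shows "b = 0"
proof -
  have J_ideal: "alg_ideal sm A J"
    using J by (rule essential_ideal_alg_ideal)
  let ?R = "right_annihilator A J"
  have R_ideal: "alg_ideal sm A ?R"
    using J_ideal by (intro alg_ideal_right_annihilator) (simp add: alg_ideal_mult_right)
  have "J \<inter> ?R = {0}"
    using J_ideal R_ideal
    by (rule alg_ideal_Int_eq_0_if_mult_eq_0) (simp add: right_annihilator_def)
  then have "?R = {0}"
    using J R_ideal unfolding essential_ideal_def by blast
  then show ?thesis
    using assms unfolding right_annihilator_def by blast
qed

lemma essential_ideal_right_faithful:
  assumes J: "essential_ideal sm A J" and "b \<in> A" and "\<forall>j\<in>J. b * j = 0"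
  shows "b = 0"
proof -
  have J_ideal: "alg_ideal sm A J"
    using J by (rule essential_ideal_alg_ideal)
  let ?L = "left_annihilator A J"
  have L_ideal: "alg_ideal sm A ?L"
    using J_ideal by (intro alg_ideal_left_annihilator) (simp add: alg_ideal_mult_left)
  have "?L \<inter> J = {0}"
    using L_ideal J_ideal by (rule alg_ideal_Int_eq_0_if_mult_eq_0) (simp add: left_annihilator_def)
  then have "?L = {0}"
    using J L_ideal unfolding essential_ideal_def by blast
  then show ?thesis
    using assms unfolding left_annihilator_def by blast
qed

text \<open>Instead of the ideal generated by m (which would need spans), use the right annihilator R
  of m and mA: m lies both in R and in the left annihilator of R, and these meet only in 0.\<close>
lemma semiprime_sandwich_eq_0:
  assumes m: "m \<in> A" and sandwich: "\<forall>b\<in>A. m * b * m = 0"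
  shows "m = 0"
proof -
  let ?S = "insert m ((*) m ` A)"
  let ?R = "right_annihilator A ?S"
  let ?L = "left_annihilator A ?R"
  have R_ideal: "alg_ideal sm A ?R"
    using m by (intro alg_ideal_right_annihilator) (auto simp: mult.assoc mult_in_A)
  have L_ideal: "alg_ideal sm A ?L"
    using R_ideal by (intro alg_ideal_left_annihilator) (simp add: alg_ideal_mult_left)
  have LR: "?L \<inter> ?R = {0}"
    using L_ideal R_ideal by (rule alg_ideal_Int_eq_0_if_mult_eq_0) (simp add: left_annihilator_def)
  have "b * m = 0" if b: "b \<in> A" for b
  proof -
    have "m * c * (b * m) = 0" if "c \<in> A" for c
    proof -
      have "m * c * (b * m) = m * (c * b) * m"
        by (simp add: mult.assoc)
      then show ?thesis
        using sandwich b that mult_in_A by simp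
    qed
    then have "b * m \<in> ?R"
      using sandwich b m mult_in_A by (auto simp: right_annihilator_def mult.assoc[symmetric])
    moreover have "b * m \<in> ?L"
      using b m mult_in_A by (auto simp: left_annihilator_def right_annihilator_def mult.assoc)
    ultimately show ?thesis
      using LR by blast
  qed
  then have "m \<in> ?R"
    using m sandwich by (auto simp: right_annihilator_def)
  moreover have "m \<in> ?L"
    using m by (auto simp: left_annihilator_def right_annihilator_def)
  ultimately show ?thesis
    using LR by blast
qed

lemma alg_ideal_sandwich_eq_0:
  assumes J: "alg_ideal sm A J" and d: "d \<in> J" and sandwich: "\<forall>u\<in>J. d * u * d = 0"
  shows "d = 0"
proof (rule semiprime_sandwich_eq_0)
  show dA: "d \<in> A"
    using J d alg_ideal_subset by blast
  show "\<forall>b\<in>A. d * b * d = 0"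
  proof
    fix b assume b: "b \<in> A"
    show "d * b * d = 0"
    proof (rule semiprime_sandwich_eq_0)
      show "d * b * d \<in> A"
        using dA b by (simp add: mult_in_A)
      have "b * d * a * d * b \<in> J" if "a \<in> A" for a
        using J b d dA that by (simp add: alg_ideal_mult_left alg_ideal_mult_right mult_in_A)
      moreover have "d * b * d * a * (d * b * d) = d * (b * d * a * d * b) * d" for a
        by (simp add: mult.assoc)
      ultimately show "\<forall>a\<in>A. d * b * d * a * (d * b * d) = 0"
        using sandwich by simp
    qed
  qed
qed

lemma central_bracket_mult_bracket_eq_0:
  assumes J: "alg_ideal sm A J" and tt: "two_torsion_free A" and w: "w \<in> J"
    and c_central: "bracket a w \<in> lie_center A"
    and central: "\<forall>t\<in>J. bracket a (bracket w t) \<in> lie_center A"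
    and t: "t \<in> J"
  shows "bracket a w * bracket w t = 0"
proof -
  define c where "c = bracket a w"
  have JA: "\<And>u. u \<in> J \<Longrightarrow> u \<in> A"
    using J alg_ideal_subset by blast
  have cA: "c \<in> A" and c_comm: "\<And>b. b \<in> A \<Longrightarrow> c * b = b * c"
    using c_central lie_center_subset lie_center_commute by (auto simp: c_def)
  have double: "c * bracket w (bracket w t) = 0" if t: "t \<in> J" for t
    unfolding c_def
  proof (rule bracket_mult_double_bracket_eq_0)
    have "w * t \<in> J"
      using J JA t w by (simp add: alg_ideal_mult_right)
    then show "w * bracket a (bracket w t) = bracket a (bracket w t) * w"
      "w * bracket a (bracket w (w * t)) = bracket a (bracket w (w * t)) * w"
      using central t JA[OF w] lie_center_commute by (metis)+
    show "w * bracket a w = bracket a w * w"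
      using c_comm JA[OF w] by (simp add: c_def)
  qed
  have square: "c * bracket w t * bracket w s = 0" if t: "t \<in> J" and s: "s \<in> J" for t s
  proof -
    have "t * s \<in> J"
      using J JA s t by (simp add: alg_ideal_mult_right)
    then have "c * bracket w t * bracket w s + c * bracket w t * bracket w s = 0"
      by (intro bracket_products_twice_eq_0 c_comm JA t double s)
    moreover have "c * bracket w t * bracket w s \<in> A"
      using cA JA s t w by (simp add: mult_in_A bracket_in_A)
    ultimately show ?thesis
      using tt unfolding two_torsion_free_def by blast
  qed
  have zero: "c * bracket w t * u * bracket w s = 0" if u: "u \<in> J" and s: "s \<in> J" for u s
  proof -
    have "u * s \<in> J"
      using J JA s u by (simp add: alg_ideal_mult_right)
    then have "c * bracket w t * bracket w (u * s) = 0"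
      using square[OF t] by blast
    then have "c * bracket w t * bracket w u * s + c * bracket w t * u * bracket w s = 0"
      unfolding bracket_mult_right by (simp add: algebra_simps)
    then show ?thesis
      using square[OF t u] by simp
  qed
  have "c * bracket w t * u * (c * bracket w t) = 0" if u: "u \<in> J" for u
  proof -
    have "c * bracket w t * u \<in> A"
      using cA JA t u w by (simp add: mult_in_A bracket_in_A)
    then have "(c * bracket w t * u) * c = c * (c * bracket w t * u)"
      using c_comm by simp
    then have "c * bracket w t * u * (c * bracket w t) = c * (c * bracket w t * u * bracket w t)"
      by (metis mult.assoc)
    then show ?thesis
      using zero[OF u t] by simp
  qed
  moreover have "c * bracket w t \<in> J"
    using J cA JA[OF w] t by (simp add: alg_ideal_mult_left alg_ideal_bracket)
  ultimately show ?thesis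
    using alg_ideal_sandwich_eq_0[OF J] by (simp add: c_def)
qed

lemma central_bracket_eq_0:
  assumes J: "essential_ideal sm A J" and aJ: "\<forall>x\<in>J. a * x \<in> A \<and> x * a \<in> A"
    and w: "w \<in> J" and c_central: "bracket a w \<in> lie_center A"
    and annihilates: "\<forall>t\<in>J. bracket a w * bracket w t = 0"
  shows "bracket a w = 0"
proof -
  define c where "c = bracket a w"
  have JA: "\<And>u. u \<in> J \<Longrightarrow> u \<in> A"
    using J essential_ideal_alg_ideal alg_ideal_subset by blast
  have cA: "c \<in> A" and c_comm: "\<And>b. b \<in> A \<Longrightarrow> c * b = b * c"
    using c_central lie_center_subset lie_center_commute by (auto simp: c_def)
  have c_ann: "\<And>t. t \<in> J \<Longrightarrow> c * bracket w t = 0"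
    using annihilates by (simp add: c_def)
  have c_bracket_A: "c * bracket w r = 0" if r: "r \<in> A" for r
  proof (rule essential_ideal_left_faithful[OF J])
    show "c * bracket w r \<in> A"
      using cA JA[OF w] r by (simp add: mult_in_A bracket_in_A)
    show "\<forall>t\<in>J. t * (c * bracket w r) = 0"
    proof
      fix t assume t: "t \<in> J"
      have "t * r \<in> J"
        using alg_ideal_mult_right[OF essential_ideal_alg_ideal[OF J] r t] .
      then have "c * bracket w (t * r) = 0"
        by (rule c_ann)
      then have "c * bracket w t * r + (c * t) * bracket w r = 0"
        unfolding bracket_mult_right by (simp add: algebra_simps)
      then show "t * (c * bracket w r) = 0"
        using c_ann[OF t] c_comm[OF JA[OF t]] by (simp add: mult.assoc)
    qed
  qed
  have "c * c = 0"
  proof (rule essential_ideal_left_faithful[OF J])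
    show "c * c \<in> A"
      using cA by (simp add: mult_in_A)
    show "\<forall>t\<in>J. t * (c * c) = 0"
    proof
      fix t assume t: "t \<in> J"
      have "c * bracket w (t * a) = 0"
        using aJ c_bracket_A t by blast
      then have "c * bracket w t * a + (c * t) * bracket w a = 0"
        unfolding bracket_mult_right by (simp add: algebra_simps)
      moreover have "bracket w a = - c"
        using bracket_antisym by (simp add: c_def)
      ultimately show "t * (c * c) = 0"
        using c_ann[OF t] c_comm[OF JA[OF t]] by (simp add: mult.assoc)
    qed
  qed
  have "c * b * c = 0" if b: "b \<in> A" for b
  proof -
    have "c * b * c = c * (b * c)"
      by (simp add: mult.assoc)
    also have "\<dots> = c * (c * b)"
      using c_comm[OF b] by simp
    also have "\<dots> = 0"
      using \<open>c * c = 0\<close> by (simp add: mult.assoc[symmetric])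
    finally show ?thesis .
  qed
  then show ?thesis
    using cA semiprime_sandwich_eq_0 by (simp add: c_def)
qed

lemma bracket_commutator_eq_0_if_central:
  assumes J: "essential_ideal sm A J" and tt: "two_torsion_free A"
    and aJ: "\<forall>x\<in>J. a * x \<in> A \<and> x * a \<in> A"
    and central: "\<forall>x\<in>J. \<forall>y\<in>J. bracket a (bracket x y) \<in> lie_center A"
    and x: "x \<in> J" and y: "y \<in> J"
  shows "bracket a (bracket x y) = 0"
proof (rule central_bracket_eq_0[OF J aJ])
  have J_ideal: "alg_ideal sm A J"
    using J by (rule essential_ideal_alg_ideal)
  then show w: "bracket x y \<in> J"
    using alg_ideal_subset x y by (blast intro: alg_ideal_bracket)
  show "bracket a (bracket x y) \<in> lie_center A"
    using central x y by blast
  show "\<forall>t\<in>J. bracket a (bracket x y) * bracket (bracket x y) t = 0"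
    using central_bracket_mult_bracket_eq_0[OF J_ideal tt w] central w x y by blast
qed

lemma bracket_sandwich_eq_0_if_bracket_commutators_eq_0:
  assumes J: "alg_ideal sm A J"
    and aJ: "\<forall>x\<in>J. a * x \<in> A \<and> x * a \<in> A"
    and vanish: "\<forall>x\<in>J. \<forall>y\<in>J. bracket a (bracket x y) = 0"
    and x: "x \<in> J" and y: "y \<in> J" and t: "t \<in> J"
  shows "bracket a x * y * t * bracket a x = 0"
proof -
  define d where "d = bracket a x"
  have JA: "\<And>u. u \<in> J \<Longrightarrow> u \<in> A"
    using J alg_ideal_subset by blast
  have J_mult: "\<And>b u. b \<in> A \<Longrightarrow> u \<in> J \<Longrightarrow> u * b \<in> J"
    using J alg_ideal_mult_right by blast
  have d_bracket: "d * bracket x y = 0" if y: "y \<in> J" for y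
  proof -
    have "bracket a (bracket x (x * y)) = 0"
      using vanish x J_mult[OF JA[OF y] x] by blast
    then have "d * bracket x y + x * bracket a (bracket x y) = 0"
      unfolding bracket_self_mult bracket_mult_right d_def .
    then show ?thesis
      using vanish x y by simp
  qed
  have d_y_bracket: "d * y * bracket x u = 0" if y: "y \<in> J" and u: "u \<in> A" for y u
  proof -
    have "d * bracket x (y * u) = 0"
      using d_bracket J_mult[OF u y] by blast
    then have "d * bracket x y * u + d * y * bracket x u = 0"
      by (simp add: bracket_mult_right distrib_left mult.assoc)
    then show ?thesis
      by (simp add: d_bracket[OF y])
  qed
  have "d * y * bracket x (t * a) = 0"
    using aJ d_y_bracket t y by blast
  then have "d * y * bracket x t * a + d * y * t * bracket x a = 0"
    by (simp add: bracket_mult_right distrib_left mult.assoc)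
  then have "d * y * t * bracket x a = 0"
    by (simp add: d_y_bracket[OF y JA[OF t]])
  moreover have "bracket x a = - d"
    using bracket_antisym by (simp add: d_def)
  ultimately show ?thesis
    by (simp add: d_def)
qed

lemma bracket_eq_0_if_bracket_commutators_eq_0:
  assumes J: "essential_ideal sm A J"
    and aJ: "\<forall>x\<in>J. a * x \<in> A \<and> x * a \<in> A"
    and vanish: "\<forall>x\<in>J. \<forall>y\<in>J. bracket a (bracket x y) = 0"
    and x: "x \<in> J"
  shows "bracket a x = 0"
proof -
  define d where "d = bracket a x"
  have J_ideal: "alg_ideal sm A J"
    using J by (rule essential_ideal_alg_ideal)
  have JA: "\<And>u. u \<in> J \<Longrightarrow> u \<in> A"
    using J_ideal alg_ideal_subset by blast
  have dA: "d \<in> A"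
    using aJ x by (simp add: d_def bracket_def diff_in_A)
  have "u * d * v = 0" if u: "u \<in> J" and v: "v \<in> J" for u v
  proof (rule semiprime_sandwich_eq_0)
    show "u * d * v \<in> A"
      using JA u v dA by (simp add: mult_in_A)
    show "\<forall>b\<in>A. u * d * v * b * (u * d * v) = 0"
    proof
      fix b assume b: "b \<in> A"
      have "u * d * v * b * (u * d * v) = u * (d * (v * b) * u * d) * v"
        by (simp add: mult.assoc)
      moreover have "v * b \<in> J"
        using J_ideal b v by (rule alg_ideal_mult_right)
      ultimately show "u * d * v * b * (u * d * v) = 0"
        using bracket_sandwich_eq_0_if_bracket_commutators_eq_0[OF J_ideal aJ vanish x _ u]
        by (simp add: d_def)
    qed
  qed
  then have "u * d = 0" if u: "u \<in> J" for u
    using essential_ideal_right_faithful[OF J, of "u * d"] JA[OF u] dA u by (simp add: mult_in_A)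
  then have "d = 0"
    using essential_ideal_left_faithful[OF J dA] by blast
  then show ?thesis
    by (simp add: d_def)
qed

lemma commutes_with_essential_ideal_if_central_commutators:
  assumes J: "essential_ideal sm A J" and tt: "two_torsion_free A"
    and aJ: "\<forall>x\<in>J. a * x \<in> A \<and> x * a \<in> A"
    and central: "\<forall>x\<in>J. \<forall>y\<in>J. bracket a (bracket x y) \<in> lie_center A"
  shows "\<forall>x\<in>J. bracket a x = 0"
  using bracket_eq_0_if_bracket_commutators_eq_0[OF J aJ]
    bracket_commutator_eq_0_if_central[OF J tt aJ central] by blast

lemma lie_center_if_commutes_with_essential_ideal:
  assumes J: "essential_ideal sm A J" and a: "a \<in> A" and commutes: "\<forall>x\<in>J. bracket a x = 0"
  shows "a \<in> lie_center A"
proof -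
  have "bracket a b = 0" if b: "b \<in> A" for b
  proof (rule essential_ideal_left_faithful[OF J])
    show "bracket a b \<in> A"
      using a b by (rule bracket_in_A)
    show "\<forall>x\<in>J. x * bracket a b = 0"
    proof
      fix x assume x: "x \<in> J"
      have "x * b \<in> J"
        using alg_ideal_mult_right[OF essential_ideal_alg_ideal[OF J] b x] .
      moreover have "bracket a (x * b) = bracket a x * b + x * bracket a b"
        by (rule bracket_mult_right)
      ultimately show "x * bracket a b = 0"
        using commutes x by simp
    qed
  qed
  then show ?thesis
    using a by (simp add: lie_center_def)
qed

lemma lie_center_commutator_space_subset: "lie_center (commutator_space sm A) \<subseteq> lie_center A"
proof
  fix z assume z: "z \<in> lie_center (commutator_space sm A)"
  then have zA: "z \<in> A"
    using commutator_space_subset[OF subalgebra_A] lie_center_subset by blast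
  have "\<forall>x\<in>A. \<forall>y\<in>A. bracket z (bracket x y) = 0"
    using z bracket_in_commutator_space[where S = A and sm = sm] unfolding lie_center_def by blast
  then have "\<forall>x\<in>A. bracket z x = 0"
    using bracket_eq_0_if_bracket_commutators_eq_0[OF essential_ideal_A] zA by (simp add: mult_in_A)
  then show "z \<in> lie_center A"
    using zA by (simp add: lie_center_def)
qed

end

definition commutator_lie_ideal ::
    "('r::comm_ring_1 \<Rightarrow> 'q::ring \<Rightarrow> 'q) \<Rightarrow> 'q set \<Rightarrow> 'q set \<Rightarrow> 'q set" where
  "commutator_lie_ideal sm A J =
     phi_span sm ({bracket x y |x y. x \<in> J \<and> y \<in> J} \<union> lie_center (commutator_space sm A))"

lemma submodule_commutator_lie_ideal: "submodule sm (commutator_lie_ideal sm A J)"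
  unfolding commutator_lie_ideal_def by (rule submodule_phi_span)

lemma lie_center_subset_commutator_lie_ideal:
  "lie_center (commutator_space sm A) \<subseteq> commutator_lie_ideal sm A J"
  unfolding commutator_lie_ideal_def by (rule subset_trans[OF _ phi_span_superset]) (rule Un_upper2)

lemma bracket_in_commutator_lie_ideal:
  "x \<in> J \<Longrightarrow> y \<in> J \<Longrightarrow> bracket x y \<in> commutator_lie_ideal sm A J"
  unfolding commutator_lie_ideal_def by (rule subsetD[OF phi_span_superset]) blast

lemma commutator_lie_ideal_subset:
  assumes "J \<subseteq> A"
  shows "commutator_lie_ideal sm A J \<subseteq> commutator_space sm A"
  unfolding commutator_lie_ideal_def
proof (rule phi_span_least[OF _ submodule_commutator_space])
  have "{bracket x y |x y. x \<in> J \<and> y \<in> J} \<subseteq> commutator_space sm A"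
    using assms by (auto intro: bracket_in_commutator_space)
  then show "{bracket x y |x y. x \<in> J \<and> y \<in> J} \<union> lie_center (commutator_space sm A)
      \<subseteq> commutator_space sm A"
    using lie_center_subset by (rule Un_least)
qed

context semiprime_algebra
begin

lemma bracket_commutator_lie_ideal:
  assumes J: "alg_ideal sm A J" and b: "b \<in> A" and x: "x \<in> commutator_lie_ideal sm A J"
  shows "bracket b x \<in> commutator_lie_ideal sm A J"
  using x[unfolded commutator_lie_ideal_def]
proof (induction rule: phi_span_induct)
  case zero
  show ?case
    using submodule_zero[OF submodule_commutator_lie_ideal] by simp
next
  case (generator g)
  then show ?case
  proof
    assume "g \<in> {bracket x y |x y. x \<in> J \<and> y \<in> J}"
    then obtain x y where x: "x \<in> J" and y: "y \<in> J" and g: "g = bracket x y"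
      by blast
    have "bracket (bracket b x) y \<in> commutator_lie_ideal sm A J"
      and "bracket x (bracket b y) \<in> commutator_lie_ideal sm A J"
      using J b x y by (simp_all add: alg_ideal_bracket bracket_in_commutator_lie_ideal)
    then show ?thesis
      unfolding g bracket_jacobi[of b x y]
      by (rule submodule_add[OF submodule_commutator_lie_ideal])
  next
    assume "g \<in> lie_center (commutator_space sm A)"
    then have "g \<in> lie_center A"
      using lie_center_commutator_space_subset by blast
    then have "bracket b g = 0"
      using b lie_center_commute by (metis bracket_eq_0_iff)
    then show ?thesis
      using submodule_zero[OF submodule_commutator_lie_ideal] by simp
  qed
next
  case (add u v)
  then show ?case
    by (simp add: bracket_add_right submodule_add[OF submodule_commutator_lie_ideal])
next
  case (scale c u)
  then show ?case
    by (simp add: bracket_scale_right submodule_scale[OF submodule_commutator_lie_ideal])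
qed

lemma commutator_lie_ideal_annihilator:
  assumes J: "essential_ideal sm A J" and tt: "two_torsion_free A"
    and a: "a \<in> commutator_space sm A"
    and annihilates:
      "\<forall>x\<in>commutator_lie_ideal sm A J. bracket a x \<in> lie_center (commutator_space sm A)"
  shows "a \<in> lie_center (commutator_space sm A)"
proof -
  have aA: "a \<in> A"
    using a commutator_space_subset[OF subalgebra_A] by blast
  have JA: "J \<subseteq> A"
    using J essential_ideal_alg_ideal alg_ideal_subset by blast
  have aJ: "\<forall>x\<in>J. a * x \<in> A \<and> x * a \<in> A"
    using aA JA by (simp add: mult_in_A subset_iff)
  have "\<forall>x\<in>J. \<forall>y\<in>J. bracket a (bracket x y) \<in> lie_center A"
  proof (intro ballI)
    fix x y assume "x \<in> J" "y \<in> J"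
    then have "bracket x y \<in> commutator_lie_ideal sm A J"
      by (rule bracket_in_commutator_lie_ideal)
    then have "bracket a (bracket x y) \<in> lie_center (commutator_space sm A)"
      by (rule bspec[OF annihilates])
    then show "bracket a (bracket x y) \<in> lie_center A"
      by (rule subsetD[OF lie_center_commutator_space_subset])
  qed
  then have "\<forall>x\<in>J. bracket a x = 0"
    by (rule commutes_with_essential_ideal_if_central_commutators[OF J tt aJ])
  then have "a \<in> lie_center A"
    by (rule lie_center_if_commutes_with_essential_ideal[OF J aA])
  then show ?thesis
    using a commutator_space_subset[OF subalgebra_A] by (rule lie_center_restrict)
qed

end

locale symmetric_quotient_subalgebra = semiprime_algebra +
  fixes Qmax Q :: "'q::ring set"
  assumes left_max_quotient: "is_left_max_quotient sm A Qmax"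
    and subalgebra_Q: "subalgebra sm Q"
    and A_subset_Q: "A \<subseteq> Q"
    and Q_subset_Qs: "Q \<subseteq> Qs sm A Qmax"
begin

lemma Q_subset_Qmax: "Q \<subseteq> Qmax"
  using Q_subset_Qs by (auto simp: Qs_def)

lemma Q_denominator:
  assumes "q \<in> Q"
  obtains J where "essential_ideal sm A J" and "\<forall>x\<in>J. x * q \<in> A \<and> q * x \<in> A"
  using assms Q_subset_Qs by (auto simp: Qs_def)

lemma subalgebra_Qmax: "subalgebra sm Qmax"
  using left_max_quotient unfolding is_left_max_quotient_def by (elim conjE)

lemma A_subset_Qmax: "A \<subseteq> Qmax"
  using left_max_quotient unfolding is_left_max_quotient_def by (elim conjE)

lemma Qmax_denominator:
  "q \<in> Qmax \<Longrightarrow> \<exists>L. dense_left_ideal sm A L \<and> (\<forall>x\<in>L. x * q \<in> A)"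
  using left_max_quotient unfolding is_left_max_quotient_def by (elim conjE) (rule bspec)

lemma Qmax_eq_0_if_annihilated:
  assumes "q \<in> Qmax" and "dense_left_ideal sm A L" and "\<forall>x\<in>L. x * q = 0"
  shows "q = 0"
proof -
  have "\<forall>q\<in>Qmax. \<forall>L. q \<noteq> 0 \<and> dense_left_ideal sm A L \<longrightarrow> (\<exists>x\<in>L. x * q \<noteq> 0)"
    using left_max_quotient unfolding is_left_max_quotient_def by (elim conjE)
  then show ?thesis
    using assms by blast
qed

lemma lie_center_A_commutes_with_Qmax:
  assumes z: "z \<in> lie_center A" and p: "p \<in> Qmax"
  shows "bracket z p = 0"
proof -
  obtain L where L: "dense_left_ideal sm A L" and Lp: "\<forall>x\<in>L. x * p \<in> A"
    using Qmax_denominator[OF p] by blast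
  have "z \<in> Qmax"
    using z lie_center_subset A_subset_Qmax by blast
  then have zp: "bracket z p \<in> Qmax"
    using subalgebra_Qmax p by (simp add: subalgebra_bracket)
  have "x * bracket z p = 0" if x: "x \<in> L" for x
  proof -
    have "x \<in> A"
      using L x by (auto simp: dense_left_ideal_def left_ideal_def)
    then have xz: "x * z = z * x" and xpz: "(x * p) * z = z * (x * p)"
      using z Lp x lie_center_commute by metis+
    have "x * bracket z p = (x * z) * p - (x * p) * z"
      by (simp add: bracket_def algebra_simps)
    also have "\<dots> = (z * x) * p - z * (x * p)"
      by (simp only: xz xpz)
    also have "\<dots> = 0"
      by (simp add: mult.assoc)
    finally show ?thesis .
  qed
  then show ?thesis
    using Qmax_eq_0_if_annihilated[OF zp L] by blast
qed

lemma lie_center_commutator_space_eq: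
  "lie_center (commutator_space sm A) = commutator_space sm A \<inter> lie_center (commutator_space sm Q)"
proof
  have LA_LQ: "commutator_space sm A \<subseteq> commutator_space sm Q"
    using A_subset_Q by (rule commutator_space_mono)
  show "lie_center (commutator_space sm A)
      \<subseteq> commutator_space sm A \<inter> lie_center (commutator_space sm Q)"
  proof
    fix z assume z: "z \<in> lie_center (commutator_space sm A)"
    have "bracket z x = 0" if "x \<in> commutator_space sm Q" for x
    proof (rule lie_center_A_commutes_with_Qmax)
      show "z \<in> lie_center A"
        using z by (rule subsetD[OF lie_center_commutator_space_subset])
      show "x \<in> Qmax"
        using that commutator_space_subset[OF subalgebra_Q] Q_subset_Qmax by blast
    qed
    moreover have "z \<in> commutator_space sm A"
      using z lie_center_subset by blast
    ultimately show "z \<in> commutator_space sm A \<inter> lie_center (commutator_space sm Q)"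
      using LA_LQ by (auto simp: lie_center_def)
  qed
  show "commutator_space sm A \<inter> lie_center (commutator_space sm Q)
      \<subseteq> lie_center (commutator_space sm A)"
    using LA_LQ by (auto intro: lie_center_restrict)
qed

lemma Qmax_right_faithful:
  assumes q: "q \<in> Qmax" and J: "essential_ideal sm A J" and annihilated: "\<forall>x\<in>J. q * x = 0"
  shows "q = 0"
proof -
  obtain L where L: "dense_left_ideal sm A L" and Lq: "\<forall>x\<in>L. x * q \<in> A"
    using Qmax_denominator[OF q] by blast
  have "x * q = 0" if "x \<in> L" for x
    using essential_ideal_right_faithful[OF J, of "x * q"] Lq annihilated that
    by (simp add: mult.assoc)
  then show ?thesis
    using Qmax_eq_0_if_annihilated[OF q L] by blast
qed

lemma commutes_with_Q_if_commutes_with_essential_ideal: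
  assumes J: "essential_ideal sm A J" and q: "q \<in> Q"
    and commutes: "\<forall>x\<in>J. bracket q x = 0" and r: "r \<in> Q"
  shows "bracket q r = 0"
proof -
  define s where "s = bracket q r"
  have J_ideal: "alg_ideal sm A J"
    using J by (rule essential_ideal_alg_ideal)
  obtain K where K: "essential_ideal sm A K" and Kr: "\<forall>x\<in>K. x * r \<in> A \<and> r * x \<in> A"
    using Q_denominator[OF r] by blast
  have "s \<in> Q"
    using subalgebra_Q q r by (simp add: s_def subalgebra_bracket)
  then have s: "s \<in> Qmax"
    using Q_subset_Qmax by blast
  have "s * y = 0" if y: "y \<in> K" for y
  proof (rule Qmax_right_faithful[OF _ J])
    have yA: "y \<in> A"
      using K essential_ideal_alg_ideal alg_ideal_subset y by blast
    then show "s * y \<in> Qmax"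
      using subalgebra_Qmax s A_subset_Qmax unfolding subalgebra_def by blast
    show "\<forall>x\<in>J. s * y * x = 0"
    proof
      fix x assume x: "x \<in> J"
      have "r * y \<in> A"
        using Kr y by blast
      then have "r * y * x \<in> J" and "y * x \<in> J"
        using J_ideal x yA by (simp_all add: alg_ideal_mult_left)
      then have "bracket q (r * y * x) = 0" and "bracket q (y * x) = 0"
        using commutes by blast+
      moreover have "bracket q (r * (y * x)) = s * (y * x) + r * bracket q (y * x)"
        by (simp add: s_def bracket_mult_right)
      ultimately show "s * y * x = 0"
        by (simp add: mult.assoc)
    qed
  qed
  then have "s = 0"
    using Qmax_right_faithful[OF s K] by blast
  then show ?thesis
    by (simp add: s_def)
qed

lemma bracket_commutator_lie_ideal_right:
  assumes J: "alg_ideal sm A J" and q: "q \<in> Qmax" and Jq: "\<forall>x\<in>J. x * q \<in> A \<and> q * x \<in> A"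
    and x: "x \<in> commutator_lie_ideal sm A J"
  shows "bracket x q \<in> commutator_space sm A"
  using x[unfolded commutator_lie_ideal_def]
proof (induction rule: phi_span_induct)
  case zero
  show ?case
    using submodule_zero[OF submodule_commutator_space] by simp
next
  case (generator g)
  then show ?case
  proof
    assume "g \<in> {bracket x y |x y. x \<in> J \<and> y \<in> J}"
    then obtain x y where x: "x \<in> J" and y: "y \<in> J" and g: "g = bracket x y"
      by blast
    have JA: "x \<in> A" "y \<in> A"
      using J x y alg_ideal_subset by blast+
    have "bracket x q \<in> A" "bracket y q \<in> A"
      using Jq x y by (simp_all add: bracket_def diff_in_A)
    then have "bracket x (bracket y q) \<in> commutator_space sm A"
      and "bracket y (bracket x q) \<in> commutator_space sm A"
      using JA by (simp_all add: bracket_in_commutator_space)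
    then show ?thesis
      unfolding g bracket_bracket_left by (rule submodule_diff[OF submodule_commutator_space])
  next
    assume "g \<in> lie_center (commutator_space sm A)"
    then have "bracket g q = 0"
      using lie_center_commutator_space_subset q by (blast intro: lie_center_A_commutes_with_Qmax)
    then show ?thesis
      using submodule_zero[OF submodule_commutator_space] by simp
  qed
next
  case (add u v)
  then show ?case
    by (simp add: bracket_add_left submodule_add[OF submodule_commutator_space])
next
  case (scale c u)
  then show ?case
    by (simp add: bracket_scale_left submodule_scale[OF submodule_commutator_space])
qed

lemma commutator_lie_ideal_bracket_not_central:
  assumes J: "essential_ideal sm A J" and tt: "two_torsion_free A"
    and q: "q \<in> commutator_space sm Q" and not_central: "q \<notin> lie_center (commutator_space sm Q)"
    and Jq: "\<forall>x\<in>J. x * q \<in> A \<and> q * x \<in> A"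
  shows "\<exists>x\<in>commutator_lie_ideal sm A J. bracket x q \<notin> lie_center (commutator_space sm Q)"
proof (rule ccontr)
  assume "\<not> ?thesis"
  then have central: "bracket x q \<in> lie_center (commutator_space sm Q)"
    if "x \<in> commutator_lie_ideal sm A J" for x
    using that by blast
  have qQ: "q \<in> Q"
    using q commutator_space_subset[OF subalgebra_Q] by blast
  have "bracket q (bracket x y) \<in> lie_center A" if "x \<in> J" "y \<in> J" for x y
  proof -
    have xy: "bracket x y \<in> commutator_lie_ideal sm A J"
      using that by (rule bracket_in_commutator_lie_ideal)
    have "bracket (bracket x y) q \<in> lie_center (commutator_space sm A)"
      using bracket_commutator_lie_ideal_right[OF essential_ideal_alg_ideal[OF J] _ Jq xy]
        central[OF xy] qQ Q_subset_Qmax lie_center_commutator_space_eq by blast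
    then have "- bracket (bracket x y) q \<in> lie_center (commutator_space sm A)"
      by (rule lie_center_uminus[OF submodule_commutator_space])
    then show ?thesis
      using lie_center_commutator_space_subset bracket_antisym by (metis subsetD)
  qed
  then have "\<forall>x\<in>J. bracket q x = 0"
    using commutes_with_essential_ideal_if_central_commutators[OF J tt] Jq by blast
  then have "\<forall>r\<in>Q. bracket q r = 0"
    using commutes_with_Q_if_commutes_with_essential_ideal[OF J qQ] by blast
  then have "q \<in> lie_center (commutator_space sm Q)"
    using q commutator_space_subset[OF subalgebra_Q] by (auto simp: lie_center_def)
  with not_central show False ..
qed

lemma lie_quotient_algebra_of_quotients_commutator_spaces:
  assumes tt: "two_torsion_free A"
  shows "lie_quotient_algebra_of_quotients sm
           (commutator_space sm A) (lie_center (commutator_space sm A))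
           (commutator_space sm Q) (lie_center (commutator_space sm Q))"
  unfolding lie_quotient_algebra_of_quotients_def
proof (intro ballI impI, goal_cases)
  case (1 q)
  then have q: "q \<in> commutator_space sm Q" and not_central: "q \<notin> lie_center (commutator_space sm Q)"
    by blast+
  have qQ: "q \<in> Q"
    using q commutator_space_subset[OF subalgebra_Q] by blast
  obtain J where J: "essential_ideal sm A J" and Jq: "\<forall>x\<in>J. x * q \<in> A \<and> q * x \<in> A"
    using Q_denominator[OF qQ] by blast
  have J_ideal: "alg_ideal sm A J"
    using J by (rule essential_ideal_alg_ideal)
  have zero_central: "0 \<in> lie_center (commutator_space sm Q)"
    using submodule_zero[OF submodule_commutator_space] by (simp add: lie_center_def)
  let ?I = "commutator_lie_ideal sm A J"
  show ?case
  proof (intro exI[of _ ?I] conjI ballI impI)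
    show "submodule sm ?I"
      by (rule submodule_commutator_lie_ideal)
    show "lie_center (commutator_space sm A) \<subseteq> ?I"
      by (rule lie_center_subset_commutator_lie_ideal)
    show "?I \<subseteq> commutator_space sm A"
      by (rule commutator_lie_ideal_subset[OF alg_ideal_subset[OF J_ideal]])
    show "bracket a x \<in> ?I" if "a \<in> commutator_space sm A" "x \<in> ?I" for a x
      using that commutator_space_subset[OF subalgebra_A] bracket_commutator_lie_ideal[OF J_ideal]
      by blast
    show "a \<in> lie_center (commutator_space sm A)"
      if "a \<in> commutator_space sm A" "\<forall>x\<in>?I. bracket a x \<in> lie_center (commutator_space sm A)" for a
      using commutator_lie_ideal_annihilator[OF J tt] that by blast
    show "\<exists>a\<in>commutator_space sm A. \<exists>z\<in>lie_center (commutator_space sm Q). bracket x q = a + z"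
      if "x \<in> ?I" for x
      using bracket_commutator_lie_ideal_right[OF J_ideal _ Jq that] qQ Q_subset_Qmax zero_central
      by force
    show "\<exists>x\<in>?I. bracket x q \<notin> lie_center (commutator_space sm Q)"
      by (rule commutator_lie_ideal_bracket_not_central[OF J tt q not_central Jq])
  qed
qed

end

theorem mainTheorem4:
  fixes sm :: "'r::comm_ring_1 \<Rightarrow> 'q::ring \<Rightarrow> 'q"
    and A Qmax Q :: "'q set"
  assumes "phi_algebra sm"
    and "subalgebra sm A"
    and "semiprime sm A"
    and "two_torsion_free A"
    and "is_left_max_quotient sm A Qmax"
    and "subalgebra sm Q"
    and "A \<subseteq> Q"
    and "Q \<subseteq> Qs sm A Qmax"
  shows "lie_center (commutator_space sm A)
           = commutator_space sm A \<inter> lie_center (commutator_space sm Q)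
       \<and> lie_quotient_algebra_of_quotients sm
           (commutator_space sm A) (lie_center (commutator_space sm A))
           (commutator_space sm Q) (lie_center (commutator_space sm Q))"
proof -
  interpret symmetric_quotient_subalgebra sm A Qmax Q
    using assms by unfold_locales
  show ?thesis
    using lie_center_commutator_space_eq
      lie_quotient_algebra_of_quotients_commutator_spaces[OF assms(4)]
    by (rule conjI)
qed

end
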